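(* Let $u_\pm\in L^\infty(\mathbb{R};\mathbb{R})$ and let $\mathcal{L}=\begin{pmatrix} -u_- & i\partial_x\\ i\partial_x & -u_+\end{pmatrix}:H^1(\mathbb{R};\mathbb{C}^2)\to L^2(\mathbb{R};\mathbb{C}^2)$. If $\lambda\in\mathbb{R}$ is an eigenvalue of $\mathcal{L}$ (i.e. $\mathcal{L}\Psi=\lambda\Psi$ for some $\Psi\in H^1(\mathbb{R};\mathbb{C}^2)\setminus\{0\}$), then for every $c\in\mathbb{R}$, $$c-\lambda\le \|(u_-+c)^{(+)}\|_{L^\infty}\quad\text{or}\quad c+\lambda\le \|(u_+-c)^{(-)}\|_{L^\infty}.$$ In particular, if $u_+\ge c$ and $-u_-\ge c$ a.e. for some $c>0$, then $\mathcal{L}$ has no eigenvalues in $(-c,c)$.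
   Context: For a real function $f$, $f^{(+)}=\max\{f,0\}$ and $f^{(-)}=\max\{-f,0\}$ denote its positive and negative parts, so $f=f^{(+)}-f^{(-)}$. *)

theory Defs
  imports "HOL-Analysis.Analysis" "HOL-Probability.Essential_Supremum"
begin

definition Linf :: "(real \<Rightarrow> real) \<Rightarrow> bool" where
  "Linf u \<longleftrightarrow> u \<in> borel_measurable lebesgue \<and> (\<exists>M. AE x in lebesgue. \<bar>u x\<bar> \<le> M)"

definition Linf_norm :: "(real \<Rightarrow> real) \<Rightarrow> ereal" where
  "Linf_norm f = esssup lebesgue (\<lambda>x. ereal \<bar>f x\<bar>)"

definition pos_part :: "(real \<Rightarrow> real) \<Rightarrow> real \<Rightarrow> real" where
  "pos_part f x = max (f x) 0"
definition neg_part :: "(real \<Rightarrow> real) \<Rightarrow> real \<Rightarrow> real" where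
  "neg_part f x = max (- f x) 0"

definition L2 :: "(real \<Rightarrow> complex) \<Rightarrow> bool" where
  "L2 f \<longleftrightarrow> f \<in> borel_measurable lebesgue \<and> integrable lebesgue (\<lambda>x. (cmod (f x))^2)"

definition test_fun :: "(real \<Rightarrow> real) \<Rightarrow> bool" where
  "test_fun \<phi> \<longleftrightarrow> (\<forall>x. \<phi> differentiable (at x)) \<and> continuous_on UNIV (deriv \<phi>)
     \<and> (\<exists>R. \<forall>x. \<bar>x\<bar> > R \<longrightarrow> \<phi> x = 0)"

definition weak_deriv :: "(real \<Rightarrow> complex) \<Rightarrow> (real \<Rightarrow> complex) \<Rightarrow> bool" where
  "weak_deriv f g \<longleftrightarrow>
     (\<forall>\<phi>. test_fun \<phi> \<longrightarrow>
        integrable lebesgue (\<lambda>x. f x * of_real (deriv \<phi> x)) \<and>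
        integrable lebesgue (\<lambda>x. g x * of_real (\<phi> x)) \<and>
        (LINT x|lebesgue. f x * of_real (deriv \<phi> x)) = - (LINT x|lebesgue. g x * of_real (\<phi> x)))"

definition H1_with_deriv :: "(real \<Rightarrow> complex) \<Rightarrow> (real \<Rightarrow> complex) \<Rightarrow> bool" where
  "H1_with_deriv f f' \<longleftrightarrow> L2 f \<and> L2 f' \<and> weak_deriv f f'"

text \<open>lambda is an eigenvalue of L = [[-u_-, i d/dx],[i d/dx, -u_+]] on H^1(R;C^2):
  there is Psi = (psi1, psi2) in H^1, not a.e. zero, with L Psi = lambda Psi in L^2 (i.e. a.e.).\<close>
definition is_eigenvalue :: "(real \<Rightarrow> real) \<Rightarrow> (real \<Rightarrow> real) \<Rightarrow> complex \<Rightarrow> bool" where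
  "is_eigenvalue um up lam \<longleftrightarrow>
     (\<exists>\<psi>1 \<psi>2 \<psi>1' \<psi>2'. H1_with_deriv \<psi>1 \<psi>1' \<and> H1_with_deriv \<psi>2 \<psi>2' \<and>
        \<not> (AE x in lebesgue. \<psi>1 x = 0 \<and> \<psi>2 x = 0) \<and>
        (AE x in lebesgue.
           - of_real (um x) * \<psi>1 x + \<i> * \<psi>2' x = lam * \<psi>1 x \<and>
           \<i> * \<psi>1' x - of_real (up x) * \<psi>2 x = lam * \<psi>2 x))"

end

theory Submission
  imports Defs
begin

(*
  Pairing the eigenvalue equations with the conjugated components is integration by
  parts on the line: for H^1 functions f, g one has \<integral> (f' g + f g') = 0, because f g has
  the integrable derivative f' g + f g' and is itself integrable, so it tends to 0 at
  both ends. Applied to f = cnj psi1, g = psi2, and using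
  psi1' = -i (u_+ + lambda) psi2 and psi2' = -i (u_- + lambda) psi1, this gives
      \<integral> (u_+ + lambda) |psi2|^2 = \<integral> (u_- + lambda) |psi1|^2.
  If both alternatives failed for some c, then u_- + lambda <= -alpha < 0 and
  u_+ + lambda >= beta > 0 almost everywhere, and the identity forces psi1 = psi2 = 0.

  The analytic input is that an H^1 function agrees a.e. with a primitive of its weak
  derivative. This is the du Bois-Reymond lemma (a locally integrable function with zero
  weak derivative is a.e. constant), proved with trapezoidal test functions and Lebesgue's
  differentiation theorem.
*)

lemma UN_symmetric_Icc_eq_UNIV: "(\<Union>n::nat. {- real n..real n}) = (UNIV :: real set)"
proof (intro set_eqI iffI UNIV_I)
  fix x :: real
  obtain n where "\<bar>x\<bar> \<le> real n"
    using real_arch_simple by blast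
  then have "x \<in> {- real n..real n}"
    by auto
  then show "x \<in> (\<Union>n. {- real n..real n})"
    by blast
qed

lemma sigma_finite_lebesgue: "sigma_finite_measure (lebesgue :: real measure)"
proof
  show "\<exists>A. countable A \<and> A \<subseteq> sets (lebesgue::real measure) \<and> \<Union> A = space lebesgue \<and>
      (\<forall>a\<in>A. emeasure lebesgue a \<noteq> \<infinity>)"
    using UN_symmetric_Icc_eq_UNIV
    by (intro exI[of _ "range (\<lambda>n::nat. {-real n..real n})"]) (auto simp: emeasure_lborel_cbox_eq)
qed

interpretation lebesgue_pair: pair_sigma_finite "lebesgue :: real measure" "lebesgue :: real measure"
  by (simp add: pair_sigma_finite.intro sigma_finite_lebesgue)

lemma measurable_fst_lebesgue [measurable]:
  "fst \<in> borel_measurable ((lebesgue :: real measure) \<Otimes>\<^sub>M lebesgue)"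
  using measurable_compose[OF measurable_fst id_borel_measurable_lebesgue] by (simp add: id_def)

lemma measurable_snd_lebesgue [measurable]:
  "snd \<in> borel_measurable ((lebesgue :: real measure) \<Otimes>\<^sub>M lebesgue)"
  using measurable_compose[OF measurable_snd id_borel_measurable_lebesgue] by (simp add: id_def)

lemma borel_measurable_continuous_lebesgue:
  fixes f :: "real \<Rightarrow> 'b::real_normed_vector"
  shows "continuous_on UNIV f \<Longrightarrow> f \<in> borel_measurable lebesgue"
  by (metis measurable_lborel2 borel_measurable_continuous_onI measurable_completion)

lemma borel_measurable_cnj [measurable (raw)]:
  "f \<in> borel_measurable M \<Longrightarrow> (\<lambda>x. cnj (f x)) \<in> borel_measurable M"
  using measurable_compose[of f M borel cnj borel] borel_measurable_continuous_onI[of cnj]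
  by (simp add: continuous_on_cnj)

lemma borel_measurable_complex_of_real [measurable (raw)]:
  "f \<in> borel_measurable M \<Longrightarrow> (\<lambda>x. complex_of_real (f x)) \<in> borel_measurable M"
  unfolding of_real_def by (intro borel_measurable_scaleR borel_measurable_const)

lemma integrable_indicator_Icc: "integrable lebesgue (indicator {a..b::real} :: real \<Rightarrow> real)"
  using emeasure_lborel_cbox_finite[of a b] by (simp add: integrable_indicator_iff)

lemma integrable_lebesgue_product:
  fixes u v :: "real \<Rightarrow> complex"
  assumes u: "integrable lebesgue u" and v: "integrable lebesgue v"
  shows "integrable (lebesgue \<Otimes>\<^sub>M lebesgue) (\<lambda>p. v (fst p) * u (snd p))"
proof (rule lebesgue_pair.Fubini_integrable)
  show "(\<lambda>p. v (fst p) * u (snd p)) \<in> borel_measurable (lebesgue \<Otimes>\<^sub>M lebesgue)"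
    using u v by measurable
  have "(\<lambda>x. LINT y|lebesgue. norm (v (fst (x, y)) * u (snd (x, y))))
      = (\<lambda>x. norm (v x) * (LINT y|lebesgue. norm (u y)))"
    by (simp add: norm_mult)
  then show "integrable lebesgue (\<lambda>x. LINT y|lebesgue. norm (v (fst (x, y)) * u (snd (x, y))))"
    using v by (simp add: integrable_norm)
  show "AE x in lebesgue. integrable lebesgue (\<lambda>y. v (fst (x, y)) * u (snd (x, y)))"
    using u by simp
qed

lemma set_integral_triangle_swap:
  fixes u v :: "real \<Rightarrow> complex"
  assumes u: "set_integrable lebesgue {a..b} u" and v: "set_integrable lebesgue {a..b} v"
  shows "(LINT t:{a..b}|lebesgue. u t * (LINT s:{a..t}|lebesgue. v s))
       = (LINT s:{a..b}|lebesgue. v s * (LINT t:{s..b}|lebesgue. u t))"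
proof -
  define u' where "u' t = indicator {a..b} t *\<^sub>R u t" for t
  define v' where "v' s = indicator {a..b} s *\<^sub>R v s" for s
  have [measurable]: "u' \<in> borel_measurable lebesgue" "v' \<in> borel_measurable lebesgue"
    using u v unfolding u'_def v'_def set_integrable_def by auto
  define H where "H s t = (if s \<le> t then v' s * u' t else 0)" for s t
  have "integrable (lebesgue \<Otimes>\<^sub>M lebesgue) (\<lambda>p. H (fst p) (snd p))"
  proof (rule Bochner_Integration.integrable_bound)
    show "integrable (lebesgue \<Otimes>\<^sub>M lebesgue) (\<lambda>p. v' (fst p) * u' (snd p))"
      using u v unfolding u'_def v'_def set_integrable_def by (rule integrable_lebesgue_product)
    show "(\<lambda>p. H (fst p) (snd p)) \<in> borel_measurable (lebesgue \<Otimes>\<^sub>M lebesgue)"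
      unfolding H_def by measurable
  qed (auto simp: H_def norm_mult)
  then have int: "integrable (lebesgue \<Otimes>\<^sub>M lebesgue) (\<lambda>(s, t). H s t)"
    by (simp add: case_prod_beta')
  have inner_s: "(LINT s|lebesgue. H s t)
      = indicator {a..b} t *\<^sub>R (u t * (LINT s:{a..t}|lebesgue. v s))" for t
  proof -
    have "(LINT s|lebesgue. H s t) = (LINT s:{a..t}|lebesgue. v s * (if t \<le> b then u t else 0))"
      unfolding set_lebesgue_integral_def
      by (rule Bochner_Integration.integral_cong) (auto simp: H_def u'_def v'_def indicator_def)
    then have "(LINT s|lebesgue. H s t) = (LINT s:{a..t}|lebesgue. v s) * (if t \<le> b then u t else 0)"
      by simp
    moreover have "t < a \<Longrightarrow> (LINT s:{a..t}|lebesgue. v s) = 0"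
      by (simp add: set_lebesgue_integral_def)
    ultimately show ?thesis
      by (cases "t < a") (auto simp: indicator_def)
  qed
  have inner_t: "(LINT t|lebesgue. H s t)
      = indicator {a..b} s *\<^sub>R (v s * (LINT t:{s..b}|lebesgue. u t))" for s
  proof -
    have "(LINT t|lebesgue. H s t) = (LINT t:{s..b}|lebesgue. (if a \<le> s then v s else 0) * u t)"
      unfolding set_lebesgue_integral_def
      by (rule Bochner_Integration.integral_cong) (auto simp: H_def u'_def v'_def indicator_def)
    then have "(LINT t|lebesgue. H s t) = (if a \<le> s then v s else 0) * (LINT t:{s..b}|lebesgue. u t)"
      by simp
    moreover have "b < s \<Longrightarrow> (LINT t:{s..b}|lebesgue. u t) = 0"
      by (simp add: set_lebesgue_integral_def)
    ultimately show ?thesis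
      by (cases "b < s") (auto simp: indicator_def)
  qed
  show ?thesis
    using lebesgue_pair.Fubini_integral[OF int]
    by (simp add: set_lebesgue_integral_def inner_s inner_t)
qed

section \<open>Test functions and the du Bois-Reymond lemma\<close>

lemma test_funE:
  assumes "test_fun \<phi>"
  obtains R where "R > 0" "\<And>x. R \<le> \<bar>x\<bar> \<Longrightarrow> \<phi> x = 0" "\<And>x. R \<le> \<bar>x\<bar> \<Longrightarrow> deriv \<phi> x = 0"
    "\<And>x. (\<phi> has_real_derivative deriv \<phi> x) (at x)" "continuous_on UNIV (deriv \<phi>)"
proof -
  from assms obtain R0 where R0: "\<And>x. \<bar>x\<bar> > R0 \<Longrightarrow> \<phi> x = 0"
    and diff: "\<And>x. \<phi> differentiable (at x)" and cont: "continuous_on UNIV (deriv \<phi>)"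
    unfolding test_fun_def by blast
  define R where "R = \<bar>R0\<bar> + 1"
  have deriv_zero: "deriv \<phi> x = 0" if "R \<le> \<bar>x\<bar>" for x
  proof -
    let ?S = "{..< -\<bar>R0\<bar>} \<union> {\<bar>R0\<bar> <..}"
    have "open ?S" "x \<in> ?S"
      using that unfolding R_def by auto
    moreover have "(\<lambda>_. 0) y = \<phi> y" if "y \<in> ?S" for y
      using that R0 by auto
    ultimately have "(\<phi> has_real_derivative 0) (at x)"
      using has_field_derivative_transform_within_open[of "\<lambda>_. 0" 0 x ?S \<phi>] by simp
    then show ?thesis
      by (rule DERIV_imp_deriv)
  qed
  have "R > 0" "\<And>x. R \<le> \<bar>x\<bar> \<Longrightarrow> \<phi> x = 0"
    using R0 unfolding R_def by auto
  moreover have "(\<phi> has_real_derivative deriv \<phi> x) (at x)" for x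
    using diff DERIV_deriv_iff_real_differentiable by blast
  ultimately show ?thesis
    using that deriv_zero cont by blast
qed

lemma test_funI:
  assumes "\<And>x. (\<phi> has_real_derivative \<phi>' x) (at x)" and "continuous_on UNIV \<phi>'"
    and "\<And>x. R < \<bar>x\<bar> \<Longrightarrow> \<phi> x = 0"
  shows "test_fun \<phi>"
  unfolding test_fun_def
proof (intro conjI allI exI[of _ R] impI)
  show "\<phi> differentiable (at x)" for x
    using assms(1) by (meson differentiableI has_field_derivative_imp_has_derivative)
  have "deriv \<phi> = \<phi>'"
    using assms(1) by (simp add: DERIV_imp_deriv ext)
  then show "continuous_on UNIV (deriv \<phi>)"
    using assms(2) by simp
  show "\<phi> x = 0" if "R < \<bar>x\<bar>" for x
    using assms(3) that .
qed

lemma indicator_Icc_scaleR_eq: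
  fixes f :: "real \<Rightarrow> 'a::real_vector"
  assumes "\<And>x. R \<le> \<bar>x\<bar> \<Longrightarrow> f x = 0"
  shows "(\<lambda>x. indicator {-R..R} x *\<^sub>R f x) = f"
proof
  show "indicator {-R..R} x *\<^sub>R f x = f x" for x
    using assms[of x] by (cases "x \<in> {-R..R}") auto
qed

lemma has_real_derivative_integral_left_vanishing:
  fixes \<psi> :: "real \<Rightarrow> real"
  assumes cont: "continuous_on UNIV \<psi>" and zero: "\<And>x. x \<le> c \<Longrightarrow> \<psi> x = 0"
  shows "((\<lambda>y. integral {c - 1..y} \<psi>) has_real_derivative \<psi> x) (at x)"
proof (cases "x < c")
  case True
  have "(\<lambda>_. 0) y = integral {c - 1..y} \<psi>" if "y \<in> {..<c}" for y
    using that zero integral_cong[of "{c - 1..y}" \<psi> "\<lambda>_. 0"] by simp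
  then have "((\<lambda>y. integral {c - 1..y} \<psi>) has_real_derivative 0) (at x)"
    using has_field_derivative_transform_within_open[of "\<lambda>_. 0" 0 x "{..<c}"] True by simp
  then show ?thesis
    using zero[of x] True by simp
next
  case False
  have "((\<lambda>y. integral {c - 1..y} \<psi>) has_real_derivative \<psi> x) (at x within {c - 1..x + 1})"
    using False by (intro integral_has_real_derivative continuous_on_subset[OF cont]) simp_all
  moreover have "x \<in> interior {c - 1..x + 1}"
    using False by auto
  ultimately show ?thesis
    by (metis at_within_interior)
qed

lemma test_fun_antiderivative:
  fixes \<psi> :: "real \<Rightarrow> real"
  assumes cont: "continuous_on UNIV \<psi>" and supp: "\<And>x. R \<le> \<bar>x\<bar> \<Longrightarrow> \<psi> x = 0"
    and mean_zero: "(LINT x|lebesgue. \<psi> x) = 0"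
  obtains \<phi> where "test_fun \<phi>" "deriv \<phi> = \<psi>"
proof -
  have "integral {-R..R} \<psi> = (LINT x:{-R..R}|lebesgue. \<psi> x)"
    using absolutely_integrable_continuous_real[OF continuous_on_subset[OF cont]]
    by (simp add: set_lebesgue_integral_eq_integral)
  also have "\<dots> = 0"
    unfolding set_lebesgue_integral_def by (subst indicator_Icc_scaleR_eq[OF supp]) (use mean_zero in auto)
  finally have int0: "integral {-R..R} \<psi> = 0" .
  define \<phi> where "\<phi> y = integral {-R - 1..y} \<psi>" for y
  have D: "(\<phi> has_real_derivative \<psi> x) (at x)" for x
    unfolding \<phi>_def using has_real_derivative_integral_left_vanishing[OF cont, of "-R"] supp by simp
  have "\<phi> x = 0" if "R < \<bar>x\<bar>" for x
  proof (cases "x < 0")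
    case True
    have "\<phi> x = integral {-R - 1..x} (\<lambda>_. 0::real)"
      unfolding \<phi>_def using that True by (intro integral_cong) (auto intro!: supp)
    then show ?thesis
      by simp
  next
    case False
    have "\<phi> x = integral {-R - 1..x} (\<lambda>y. if y \<in> {-R..R} then \<psi> y else 0)"
      unfolding \<phi>_def by (intro integral_cong) (auto intro!: supp)
    also have "\<dots> = integral ({-R..R} \<inter> {-R - 1..x}) \<psi>"
      by (rule integral_restrict_Int)
    also have "{-R..R} \<inter> {-R - 1..x} = {-R..R}"
      using that False by auto
    finally show ?thesis
      using int0 by simp
  qed
  then have "test_fun \<phi>"
    using D cont by (intro test_funI)
  moreover have "deriv \<phi> = \<psi>"
    using D by (simp add: DERIV_imp_deriv ext)
  ultimately show ?thesis
    using that by blast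
qed

definition trapezoid :: "nat \<Rightarrow> real \<Rightarrow> real \<Rightarrow> real \<Rightarrow> real" where
  "trapezoid n a b x = max 0 (min 1 (min (real (Suc n) * (x - a) + 1) (real (Suc n) * (b - x) + 1)))"

lemma continuous_on_trapezoid: "continuous_on UNIV (trapezoid n a b)"
  unfolding trapezoid_def by (intro continuous_intros)

lemma borel_measurable_trapezoid [measurable]: "trapezoid n a b \<in> borel_measurable lebesgue"
  using continuous_on_trapezoid by (rule borel_measurable_continuous_lebesgue)

lemma trapezoid_bounds: "0 \<le> trapezoid n a b x" "trapezoid n a b x \<le> 1"
  unfolding trapezoid_def by auto

lemma trapezoid_eq_1: "x \<in> {a..b} \<Longrightarrow> trapezoid n a b x = 1"
  unfolding trapezoid_def by auto

lemma trapezoid_eq_0: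
  assumes "x \<notin> {a-1..b+1}"
  shows "trapezoid n a b x = 0"
proof -
  have "real (Suc n) * (x - a) + 1 \<le> 0 \<or> real (Suc n) * (b - x) + 1 \<le> 0"
  proof (cases "x < a - 1")
    case True
    then have "real (Suc n) * (x - a) \<le> x - a"
      using mult_right_mono_neg[of 1 "real (Suc n)" "x - a"] by auto
    then show ?thesis
      using True by linarith
  next
    case False
    then have "x > b + 1"
      using assms by auto
    then have "real (Suc n) * (b - x) \<le> b - x"
      using mult_right_mono_neg[of 1 "real (Suc n)" "b - x"] by auto
    then show ?thesis
      using \<open>x > b + 1\<close> by linarith
  qed
  then show ?thesis
    unfolding trapezoid_def by auto
qed

lemma trapezoid_tendsto_indicator: "(\<lambda>n. trapezoid n a b x) \<longlonglongrightarrow> indicator {a..b} x"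
proof (cases "x \<in> {a..b}")
  case True
  then show ?thesis
    by (simp add: trapezoid_eq_1)
next
  case False
  define d where "d = (if a - x > 0 then a - x else x - b)"
  have "d > 0"
    using False unfolding d_def by auto
  obtain N :: nat where N: "1 / d < real N"
    using reals_Archimedean2 by blast
  have "trapezoid n a b x = 0" if "n \<ge> N" for n
  proof -
    have "real (Suc n) > 1 / d"
      using N that by linarith
    then have "real (Suc n) * d > 1"
      using \<open>d > 0\<close> by (simp add: field_simps)
    then show ?thesis
      using False unfolding trapezoid_def d_def by (auto split: if_splits simp: algebra_simps)
  qed
  then have "(\<lambda>n. trapezoid n a b x) \<longlonglongrightarrow> 0"
    by (intro tendsto_eventually) (auto simp: eventually_sequentially)
  then show ?thesis
    using False by simp
qed

lemma
  fixes h :: "real \<Rightarrow> 'a::{banach, second_countable_topology}"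
  assumes h: "set_integrable lebesgue {a-1..b+1} h"
  shows integrable_trapezoid_scaleR: "integrable lebesgue (\<lambda>x. trapezoid n a b x *\<^sub>R h x)"
    and tendsto_integral_trapezoid_scaleR:
      "(\<lambda>n. LINT x|lebesgue. trapezoid n a b x *\<^sub>R h x) \<longlonglongrightarrow> (LINT x:{a..b}|lebesgue. h x)"
proof -
  let ?h = "\<lambda>x. indicator {a-1..b+1} x *\<^sub>R h x"
  have restrict: "trapezoid n a b x *\<^sub>R h x = trapezoid n a b x *\<^sub>R ?h x" for n x
    using trapezoid_eq_0[of x a b n] by (cases "x \<in> {a-1..b+1}") auto
  have hm [measurable]: "?h \<in> borel_measurable lebesgue"
    using h unfolding set_integrable_def by auto
  have bound: "norm (trapezoid n a b x *\<^sub>R h x) \<le> norm (?h x)" for n x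
  proof -
    have "norm (trapezoid n a b x *\<^sub>R h x) = trapezoid n a b x * norm (?h x)"
      by (simp only: restrict norm_scaleR abs_of_nonneg[OF trapezoid_bounds(1)])
    also have "\<dots> \<le> norm (?h x)"
      by (intro mult_left_le_one_le trapezoid_bounds norm_ge_zero)
    finally show ?thesis .
  qed
  have meas: "(\<lambda>x. trapezoid n a b x *\<^sub>R h x) \<in> borel_measurable lebesgue" for n
    unfolding restrict by measurable
  show "integrable lebesgue (\<lambda>x. trapezoid n a b x *\<^sub>R h x)"
  proof (rule Bochner_Integration.integrable_bound[OF _ meas])
    show "integrable lebesgue ?h"
      using h by (simp add: set_integrable_def)
  qed (use bound in simp)
  show "(\<lambda>n. LINT x|lebesgue. trapezoid n a b x *\<^sub>R h x) \<longlonglongrightarrow> (LINT x:{a..b}|lebesgue. h x)"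
    unfolding set_lebesgue_integral_def
  proof (rule integral_dominated_convergence[where w="\<lambda>x. norm (?h x)"])
    have "set_integrable lebesgue {a..b} h"
      by (rule set_integrable_subset[OF h]) auto
    then show "(\<lambda>x. indicator {a..b} x *\<^sub>R h x) \<in> borel_measurable lebesgue"
      by (simp add: set_integrable_def)
    show "integrable lebesgue (\<lambda>x. norm (?h x))"
      using h unfolding set_integrable_def by (rule integrable_norm)
    show "AE x in lebesgue. (\<lambda>n. trapezoid n a b x *\<^sub>R h x) \<longlonglongrightarrow> indicator {a..b} x *\<^sub>R h x"
      by (intro AE_I2 tendsto_scaleR trapezoid_tendsto_indicator tendsto_const)
  qed (use meas bound in simp_all)
qed

definition locally_integrable :: "(real \<Rightarrow> 'a::{banach, second_countable_topology}) \<Rightarrow> bool" where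
  "locally_integrable g \<longleftrightarrow> (\<forall>a b. set_integrable lebesgue {a..b} g)"

lemma AE_eq_const_if_set_integrals:
  fixes h :: "real \<Rightarrow> 'b::euclidean_space"
  assumes loc: "locally_integrable h"
    and mean: "\<And>a b. a \<le> b \<Longrightarrow> (LINT x:{a..b}|lebesgue. h x) = (b - a) *\<^sub>R K"
  shows "AE x in lebesgue. h x = K"
proof -
  have HK: "integral {a..b} h = (b - a) *\<^sub>R K" if "a \<le> b" for a b
    using set_lebesgue_integral_eq_integral(2) loc mean[OF that]
    unfolding locally_integrable_def by metis
  have "\<And>a b. h integrable_on cbox a b"
    using set_lebesgue_integral_eq_integral(1) loc unfolding locally_integrable_def by auto
  then obtain N where N: "negligible N"
    and lim: "\<And>x e. \<lbrakk>x \<notin> N; 0 < e\<rbrakk> \<Longrightarrow>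
               \<exists>d>0. \<forall>t. 0 < t \<and> t < d \<longrightarrow>
                         norm (integral (cbox x (x + t *\<^sub>R One)) h /\<^sub>R t ^ DIM(real) - h x) < e"
    by (rule integrable_ccontinuous_explicit) blast
  have "h x = K" if x: "x \<notin> N" for x
  proof (rule ccontr)
    assume "h x \<noteq> K"
    then obtain d where "d > 0"
      and d: "\<And>t. 0 < t \<and> t < d \<Longrightarrow>
                 norm (integral (cbox x (x + t *\<^sub>R One)) h /\<^sub>R t ^ DIM(real) - h x) < norm (K - h x)"
      using lim[OF x, of "norm (K - h x)"] by auto
    have "norm (integral {x..x + d/2} h /\<^sub>R (d/2) - h x) < norm (K - h x)"
      using d[of "d/2"] \<open>d > 0\<close> by simp
    moreover have "integral {x..x + d/2} h /\<^sub>R (d/2) = K"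
      using HK[of x "x + d/2"] \<open>d > 0\<close> by simp
    ultimately show False
      by simp
  qed
  moreover have "AE x in lebesgue. x \<notin> N"
    using N by (simp add: negligible_iff_null_sets AE_not_in)
  ultimately show ?thesis
    by auto
qed

lemma integrable_trapezoid: "integrable lebesgue (trapezoid n a b)"
  using integrable_trapezoid_scaleR[of a b "\<lambda>_. 1::real"] integrable_indicator_Icc
  by (simp add: set_integrable_def)

lemma integral_trapezoid_ge: "b - a \<le> (LINT x|lebesgue. trapezoid n a b x)"
proof -
  have "(LINT x|lebesgue. indicator {a..b} x) \<le> (LINT x|lebesgue. trapezoid n a b x)"
    using trapezoid_eq_1[of _ a b n] trapezoid_bounds[of n a b]
    by (intro integral_mono integrable_indicator_Icc integrable_trapezoid) (auto simp: indicator_def)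
  then show ?thesis
    by (cases "a \<le> b") (auto intro: order_trans[OF _ integral_nonneg_AE] simp: trapezoid_bounds)
qed

lemma weak_deriv_zero_pairing_mean_zero:
  fixes h :: "real \<Rightarrow> complex" and \<psi> :: "real \<Rightarrow> real"
  assumes wk: "\<And>\<phi>. test_fun \<phi> \<Longrightarrow> (LINT x|lebesgue. h x * of_real (deriv \<phi> x)) = 0"
    and "continuous_on UNIV \<psi>" "\<And>x. R \<le> \<bar>x\<bar> \<Longrightarrow> \<psi> x = 0" "(LINT x|lebesgue. \<psi> x) = 0"
  shows "(LINT x|lebesgue. \<psi> x *\<^sub>R h x) = 0"
proof -
  obtain \<phi> where "test_fun \<phi>" "deriv \<phi> = \<psi>"
    using test_fun_antiderivative[OF assms(2-4)] by blast
  then show ?thesis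
    using wk[of \<phi>] by (simp add: scaleR_conv_of_real mult.commute)
qed

text \<open>
  The pairing with a trapezoid depends only on its integral, because a combination of
  trapezoids with integral zero is the derivative of a test function.
\<close>

lemma weak_deriv_zero_pairing_trapezoid:
  fixes h :: "real \<Rightarrow> complex"
  assumes loc: "locally_integrable h"
    and wk: "\<And>\<phi>. test_fun \<phi> \<Longrightarrow> (LINT x|lebesgue. h x * of_real (deriv \<phi> x)) = 0"
  obtains K where
    "\<And>n a b. (LINT x|lebesgue. trapezoid n a b x *\<^sub>R h x) = (LINT x|lebesgue. trapezoid n a b x) *\<^sub>R K"
proof -
  have int_trap: "integrable lebesgue (\<lambda>x. trapezoid n a b x *\<^sub>R h x)" for n a b
    using loc unfolding locally_integrable_def by (intro integrable_trapezoid_scaleR) auto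
  define I0 where "I0 = (LINT x|lebesgue. trapezoid 0 0 1 x)"
  have "I0 > 0"
    using integral_trapezoid_ge[of 1 0 0] unfolding I0_def by simp
  define K where "K = (1 / I0) *\<^sub>R (LINT x|lebesgue. trapezoid 0 0 1 x *\<^sub>R h x)"
  have "(LINT x|lebesgue. trapezoid n a b x *\<^sub>R h x) = (LINT x|lebesgue. trapezoid n a b x) *\<^sub>R K" for n a b
  proof -
    define c where "c = (LINT x|lebesgue. trapezoid n a b x) / I0"
    define \<psi> where "\<psi> x = trapezoid n a b x - c * trapezoid 0 0 1 x" for x
    have "\<psi> x = 0" if "\<bar>a\<bar> + \<bar>b\<bar> + 3 \<le> \<bar>x\<bar>" for x
    proof -
      have "x \<notin> {a-1..b+1}" "x \<notin> {0-1..1+1}"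
        using that by auto
      then show ?thesis
        unfolding \<psi>_def by (simp add: trapezoid_eq_0)
    qed
    moreover have "continuous_on UNIV \<psi>"
      unfolding \<psi>_def by (intro continuous_intros continuous_on_trapezoid)
    moreover have "(LINT x|lebesgue. \<psi> x) = 0"
      using \<open>I0 > 0\<close> integrable_trapezoid unfolding \<psi>_def c_def I0_def by simp
    ultimately have "(LINT x|lebesgue. \<psi> x *\<^sub>R h x) = 0"
      by (intro weak_deriv_zero_pairing_mean_zero[OF wk])
    moreover have "(\<lambda>x. \<psi> x *\<^sub>R h x) = (\<lambda>x. trapezoid n a b x *\<^sub>R h x - c *\<^sub>R (trapezoid 0 0 1 x *\<^sub>R h x))"
      unfolding \<psi>_def by (auto simp: algebra_simps)
    ultimately have "(LINT x|lebesgue. trapezoid n a b x *\<^sub>R h x)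
        = c *\<^sub>R (LINT x|lebesgue. trapezoid 0 0 1 x *\<^sub>R h x)"
      using Bochner_Integration.integral_diff[OF int_trap integrable_scaleR_right[OF int_trap]]
      by (simp only: integral_scaleR_right) simp
    then show ?thesis
      using \<open>I0 > 0\<close> unfolding K_def c_def by simp
  qed
  then show ?thesis
    by (rule that)
qed

lemma weak_deriv_zero_imp_AE_const:
  fixes h :: "real \<Rightarrow> complex"
  assumes loc: "locally_integrable h"
    and wk: "\<And>\<phi>. test_fun \<phi> \<Longrightarrow> (LINT x|lebesgue. h x * of_real (deriv \<phi> x)) = 0"
  obtains C where "AE x in lebesgue. h x = C"
proof -
  obtain K where K:
    "\<And>n a b. (LINT x|lebesgue. trapezoid n a b x *\<^sub>R h x) = (LINT x|lebesgue. trapezoid n a b x) *\<^sub>R K"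
    using weak_deriv_zero_pairing_trapezoid[OF loc wk] by blast
  have "(LINT x:{a..b}|lebesgue. h x) = (b - a) *\<^sub>R K" if "a \<le> b" for a b
  proof (rule LIMSEQ_unique)
    show "(\<lambda>n. LINT x|lebesgue. trapezoid n a b x *\<^sub>R h x) \<longlonglongrightarrow> (LINT x:{a..b}|lebesgue. h x)"
      using loc unfolding locally_integrable_def by (intro tendsto_integral_trapezoid_scaleR) auto
    have "(\<lambda>n. LINT x|lebesgue. trapezoid n a b x) \<longlonglongrightarrow> (LINT x:{a..b}|lebesgue. (1::real))"
      using tendsto_integral_trapezoid_scaleR[of a b "\<lambda>_. 1::real"] integrable_indicator_Icc
      by (simp add: set_integrable_def)
    then have "(\<lambda>n. (LINT x|lebesgue. trapezoid n a b x) *\<^sub>R K) \<longlonglongrightarrow> (b - a) *\<^sub>R K"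
      using that by (intro tendsto_scaleR tendsto_const) (simp add: set_lebesgue_integral_def)
    then show "(\<lambda>n. LINT x|lebesgue. trapezoid n a b x *\<^sub>R h x) \<longlonglongrightarrow> (b - a) *\<^sub>R K"
      by (simp only: K)
  qed
  then show ?thesis
    using AE_eq_const_if_set_integrals[OF loc] that by blast
qed

section \<open>Functions in \<open>H\<^sup>1\<close> on the line\<close>

lemma locally_integrable_continuous:
  fixes F :: "real \<Rightarrow> 'a::euclidean_space"
  shows "continuous_on UNIV F \<Longrightarrow> locally_integrable F"
  unfolding locally_integrable_def
  by (metis absolutely_integrable_continuous_real continuous_on_subset subset_UNIV)

lemma locally_integrable_mult_continuous:
  fixes g F :: "real \<Rightarrow> complex"
  assumes g: "locally_integrable g" and F: "continuous_on UNIV F"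
  shows "locally_integrable (\<lambda>t. F t * g t)"
  unfolding locally_integrable_def
proof (intro allI absolutely_integrable_bounded_measurable_product[OF bilinear_times])
  fix a b :: real
  show "F \<in> borel_measurable (lebesgue_on {a..b})"
    using F by (intro continuous_imp_measurable_on_sets_lebesgue) (auto intro: continuous_on_subset)
  show "bounded (F ` {a..b})"
    using F by (intro compact_imp_bounded compact_continuous_image) (auto intro: continuous_on_subset)
  show "g absolutely_integrable_on {a..b}"
    using g unfolding locally_integrable_def by blast
qed auto

lemma set_integral_Icc_split:
  fixes g :: "real \<Rightarrow> 'a::euclidean_space"
  assumes "locally_integrable g" "a \<le> b" "b \<le> c"
  shows "(LINT t:{a..c}|lebesgue. g t) = (LINT t:{a..b}|lebesgue. g t) + (LINT t:{b..c}|lebesgue. g t)"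
  using assms Henstock_Kurzweil_Integration.integral_combine[of a b c g]
  unfolding locally_integrable_def by (simp add: set_lebesgue_integral_eq_integral)

lemma set_integral_Icc_reversed:
  fixes g :: "real \<Rightarrow> 'a::euclidean_space"
  assumes "locally_integrable g" "b \<le> a"
  shows "(LINT t:{a..b}|lebesgue. g t) = 0"
  using assms integral_null[of a b g]
  unfolding locally_integrable_def by (simp add: set_lebesgue_integral_eq_integral)

definition primitive :: "(real \<Rightarrow> 'a::{banach, second_countable_topology}) \<Rightarrow> real \<Rightarrow> 'a" where
  "primitive g x = (LINT t:{0..x}|lebesgue. g t) - (LINT t:{x..0}|lebesgue. g t)"

lemma primitive_diff:
  fixes g :: "real \<Rightarrow> 'a::euclidean_space"
  assumes g: "locally_integrable g" and "x \<le> y"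
  shows "primitive g y - primitive g x = (LINT t:{x..y}|lebesgue. g t)"
proof -
  consider "0 \<le> x" | "x \<le> 0" "0 \<le> y" | "y \<le> 0"
    by linarith
  then show ?thesis
  proof cases
    case 1
    then show ?thesis
      using set_integral_Icc_split[OF g 1 \<open>x \<le> y\<close>] \<open>x \<le> y\<close>
      by (simp add: primitive_def set_integral_Icc_reversed[OF g])
  next
    case 2
    then show ?thesis
      using set_integral_Icc_split[OF g 2]
      by (simp add: primitive_def set_integral_Icc_reversed[OF g])
  next
    case 3
    then show ?thesis
      using set_integral_Icc_split[OF g \<open>x \<le> y\<close> 3] \<open>x \<le> y\<close>
      by (simp add: primitive_def set_integral_Icc_reversed[OF g])
  qed
qed

lemma continuous_on_primitive:
  fixes g :: "real \<Rightarrow> 'a::euclidean_space"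
  assumes g: "locally_integrable g"
  shows "continuous_on UNIV (primitive g)"
proof (rule continuous_at_imp_continuous_on, intro ballI)
  fix x :: real
  have "continuous_on {x-1..x+1} (\<lambda>y. primitive g (x-1) + integral {x-1..y} g)"
    using g unfolding locally_integrable_def
    by (intro continuous_intros indefinite_integral_continuous_1 set_lebesgue_integral_eq_integral) auto
  moreover have "primitive g y = primitive g (x-1) + integral {x-1..y} g" if "y \<in> {x-1..x+1}" for y
    using primitive_diff[OF g, of "x-1" y] that g unfolding locally_integrable_def
    by (auto simp: algebra_simps set_lebesgue_integral_eq_integral)
  ultimately have "continuous_on {x-1..x+1} (primitive g)"
    using continuous_on_cong by (metis (no_types, lifting))
  moreover have "x \<in> interior {x-1..x+1}"
    by simp
  ultimately show "isCont (primitive g) x"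
    using continuous_on_interior by blast
qed

lemma set_integral_product_rule:
  fixes f' g' F G :: "real \<Rightarrow> complex"
  assumes f': "locally_integrable f'" and F: "continuous_on UNIV F"
    and F': "\<And>x y. x \<le> y \<Longrightarrow> F y - F x = (LINT t:{x..y}|lebesgue. f' t)"
    and g': "locally_integrable g'" and G: "continuous_on UNIV G"
    and G': "\<And>x y. x \<le> y \<Longrightarrow> G y - G x = (LINT t:{x..y}|lebesgue. g' t)"
    and "a \<le> b"
  shows "(LINT t:{a..b}|lebesgue. f' t * G t + F t * g' t) = F b * G b - F a * G a"
proof -
  have f'_int: "set_integrable lebesgue {a..b} f'" and g'_int: "set_integrable lebesgue {a..b} g'"
    using f' g' unfolding locally_integrable_def by auto
  have f'G_int: "set_integrable lebesgue {a..b} (\<lambda>t. f' t * G t)"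
    using locally_integrable_mult_continuous[OF f' G]
    unfolding locally_integrable_def by (simp add: mult.commute)
  have Fg'_int: "set_integrable lebesgue {a..b} (\<lambda>t. F t * g' t)"
    using locally_integrable_mult_continuous[OF g' F] unfolding locally_integrable_def by simp
  have "(LINT t:{a..b}|lebesgue. f' t * (G t - G a))
      = (LINT t:{a..b}|lebesgue. f' t * (LINT s:{a..t}|lebesgue. g' s))"
    by (rule set_lebesgue_integral_cong) (auto simp: G')
  also have "\<dots> = (LINT s:{a..b}|lebesgue. g' s * (LINT t:{s..b}|lebesgue. f' t))"
    using f'_int g'_int by (rule set_integral_triangle_swap)
  also have "\<dots> = (LINT s:{a..b}|lebesgue. g' s * (F b - F s))"
    by (rule set_lebesgue_integral_cong) (auto simp: F')
  finally have "(LINT t:{a..b}|lebesgue. f' t * G t - G a * f' t)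
      = (LINT s:{a..b}|lebesgue. F b * g' s - F s * g' s)"
    by (simp add: algebra_simps)
  then have "(LINT t:{a..b}|lebesgue. f' t * G t) - G a * (F b - F a)
      = F b * (G b - G a) - (LINT t:{a..b}|lebesgue. F t * g' t)"
    using f'_int g'_int f'G_int Fg'_int F'[OF \<open>a \<le> b\<close>] G'[OF \<open>a \<le> b\<close>]
    by (simp add: set_integral_diff)
  then show ?thesis
    using f'G_int Fg'_int by (simp add: set_integral_add algebra_simps)
qed

lemma set_integral_deriv:
  fixes \<phi> \<phi>' :: "real \<Rightarrow> real"
  assumes D: "\<And>x. (\<phi> has_real_derivative \<phi>' x) (at x)" and cont: "continuous_on UNIV \<phi>'"
    and "a \<le> b"
  shows "(LINT x:{a..b}|lebesgue. \<phi>' x) = \<phi> b - \<phi> a"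
proof -
  have "(\<phi>' has_integral (\<phi> b - \<phi> a)) {a..b}"
    using \<open>a \<le> b\<close> D
    by (intro fundamental_theorem_of_calculus)
       (auto simp: has_real_derivative_iff_has_vector_derivative[symmetric] intro: has_field_derivative_at_within)
  moreover have "set_integrable lebesgue {a..b} \<phi>'"
    using absolutely_integrable_continuous_real[OF continuous_on_subset[OF cont]] by simp
  ultimately show ?thesis
    by (simp add: set_lebesgue_integral_eq_integral integral_unique)
qed

text \<open>
  The weak derivative identity is the product rule for \<open>primitive g\<close> and \<open>\<phi>\<close> on an interval
  \<open>[-R, R]\<close> outside of which \<open>\<phi>\<close> vanishes.
\<close>

lemma weak_deriv_primitive:
  fixes g :: "real \<Rightarrow> complex"
  assumes g: "locally_integrable g"
  shows "weak_deriv (primitive g) g"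
  unfolding weak_deriv_def
proof (intro allI impI conjI)
  fix \<phi> assume \<phi>: "test_fun \<phi>"
  obtain R where "R > 0" and \<phi>_0: "\<And>x. R \<le> \<bar>x\<bar> \<Longrightarrow> \<phi> x = 0"
    and \<phi>'_0: "\<And>x. R \<le> \<bar>x\<bar> \<Longrightarrow> deriv \<phi> x = 0"
    and D: "\<And>x. (\<phi> has_real_derivative deriv \<phi> x) (at x)" and cont: "continuous_on UNIV (deriv \<phi>)"
    using test_funE[OF \<phi>] by blast
  let ?F = "primitive g" and ?\<phi> = "\<lambda>x. complex_of_real (\<phi> x)" and ?\<phi>' = "\<lambda>x. complex_of_real (deriv \<phi> x)"
  have \<phi>_cont: "continuous_on UNIV \<phi>"
    using DERIV_isCont[OF D] by (intro continuous_at_imp_continuous_on) blast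
  have F\<phi>'_restrict: "(\<lambda>x. ?F x * ?\<phi>' x) = (\<lambda>x. indicator {-R..R} x *\<^sub>R (?F x * ?\<phi>' x))"
    using \<phi>'_0 by (intro indicator_Icc_scaleR_eq[symmetric]) simp
  have g\<phi>_restrict: "(\<lambda>x. g x * ?\<phi> x) = (\<lambda>x. indicator {-R..R} x *\<^sub>R (g x * ?\<phi> x))"
    using \<phi>_0 by (intro indicator_Icc_scaleR_eq[symmetric]) simp
  have \<phi>'_loc: "locally_integrable ?\<phi>'"
    using cont by (intro locally_integrable_continuous continuous_intros)
  have \<phi>_diff: "?\<phi> y - ?\<phi> x = (LINT t:{x..y}|lebesgue. ?\<phi>' t)" if "x \<le> y" for x y
    using set_integral_deriv[OF D cont that] by (simp add: set_integral_complex_of_real)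
  have g\<phi>_int: "set_integrable lebesgue {-R..R} (\<lambda>x. g x * ?\<phi> x)"
    using locally_integrable_mult_continuous[OF g, of ?\<phi>] \<phi>_cont
    unfolding locally_integrable_def by (simp add: mult.commute continuous_on_of_real)
  have F\<phi>'_int: "set_integrable lebesgue {-R..R} (\<lambda>x. ?F x * ?\<phi>' x)"
    using locally_integrable_mult_continuous[OF \<phi>'_loc continuous_on_primitive[OF g]]
    unfolding locally_integrable_def by simp
  show "integrable lebesgue (\<lambda>x. ?F x * ?\<phi>' x)"
    using F\<phi>'_int unfolding set_integrable_def by (subst F\<phi>'_restrict)
  show "integrable lebesgue (\<lambda>x. g x * ?\<phi> x)"
    using g\<phi>_int unfolding set_integrable_def by (subst g\<phi>_restrict)
  have "(LINT x:{-R..R}|lebesgue. g x * ?\<phi> x + ?F x * ?\<phi>' x) = ?F R * ?\<phi> R - ?F (-R) * ?\<phi> (-R)"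
  proof (rule set_integral_product_rule[OF g continuous_on_primitive[OF g] primitive_diff[OF g] \<phi>'_loc])
    show "continuous_on UNIV ?\<phi>"
      using \<phi>_cont by (rule continuous_on_of_real)
  qed (use \<phi>_diff \<open>R > 0\<close> in auto)
  then have "(LINT x:{-R..R}|lebesgue. ?F x * ?\<phi>' x) = - (LINT x:{-R..R}|lebesgue. g x * ?\<phi> x)"
    using g\<phi>_int F\<phi>'_int \<phi>_0[of R] \<phi>_0[of "-R"] \<open>R > 0\<close> by (simp add: set_integral_add eq_neg_iff_add_eq_0 add.commute)
  then show "(LINT x|lebesgue. ?F x * ?\<phi>' x) = - (LINT x|lebesgue. g x * ?\<phi> x)"
    unfolding set_lebesgue_integral_def
    by (subst F\<phi>'_restrict, subst g\<phi>_restrict) (simp only: set_lebesgue_integral_def)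
qed

lemma locally_integrable_L2:
  assumes f: "L2 f"
  shows "locally_integrable f"
  unfolding locally_integrable_def set_integrable_def
proof (intro allI)
  fix a b :: real
  show "integrable lebesgue (\<lambda>x. indicator {a..b} x *\<^sub>R f x)"
  proof (rule Bochner_Integration.integrable_bound)
    show "integrable lebesgue (\<lambda>x. indicator {a..b} x + (cmod (f x))\<^sup>2 :: real)"
      using f integrable_indicator_Icc unfolding L2_def by (intro Bochner_Integration.integrable_add) auto
    show "(\<lambda>x. indicator {a..b} x *\<^sub>R f x) \<in> borel_measurable lebesgue"
      using f unfolding L2_def by (intro borel_measurable_scaleR borel_measurable_indicator) auto
    have "cmod z \<le> 1 + (cmod z)\<^sup>2" for z
      by (smt (verit) norm_ge_zero sum_squares_bound[of "cmod z" 1] power_one mult_1_right)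
    then show "AE x in lebesgue. norm (indicator {a..b} x *\<^sub>R f x) \<le> norm (indicator {a..b} x + (cmod (f x))\<^sup>2)"
      by (intro AE_I2) (auto simp: indicator_def)
  qed
qed

lemma integrable_mult_L2:
  assumes f: "L2 f" and g: "L2 g"
  shows "integrable lebesgue (\<lambda>x. f x * g x)"
proof (rule Bochner_Integration.integrable_bound)
  show "integrable lebesgue (\<lambda>x. (cmod (f x))\<^sup>2 + (cmod (g x))\<^sup>2)"
    using f g unfolding L2_def by (intro Bochner_Integration.integrable_add) auto
  show "(\<lambda>x. f x * g x) \<in> borel_measurable lebesgue"
    using f g unfolding L2_def by (intro borel_measurable_times) auto
  show "AE x in lebesgue. norm (f x * g x) \<le> norm ((cmod (f x))\<^sup>2 + (cmod (g x))\<^sup>2)"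
  proof (rule AE_I2)
    fix x
    have "2 * cmod (f x) * cmod (g x) \<le> (cmod (f x))\<^sup>2 + (cmod (g x))\<^sup>2"
      by (rule sum_squares_bound)
    moreover have "0 \<le> cmod (f x) * cmod (g x)"
      by simp
    ultimately have "cmod (f x) * cmod (g x) \<le> (cmod (f x))\<^sup>2 + (cmod (g x))\<^sup>2"
      by linarith
    then show "norm (f x * g x) \<le> norm ((cmod (f x))\<^sup>2 + (cmod (g x))\<^sup>2)"
      by (simp add: norm_mult)
  qed
qed

lemma H1_continuous_representative:
  assumes "H1_with_deriv f f'"
  obtains F where "continuous_on UNIV F" "AE x in lebesgue. f x = F x"
    "\<And>x y. x \<le> y \<Longrightarrow> F y - F x = (LINT t:{x..y}|lebesgue. f' t)"
proof -
  have f: "L2 f" and f': "locally_integrable f'" and wd: "weak_deriv f f'"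
    using assms locally_integrable_L2 by (auto simp: H1_with_deriv_def)
  define h where "h x = f x - primitive f' x" for x
  have "locally_integrable h"
    using locally_integrable_L2[OF f] locally_integrable_continuous[OF continuous_on_primitive[OF f']]
    unfolding locally_integrable_def h_def by (auto intro: set_integral_diff)
  moreover have "(LINT x|lebesgue. h x * of_real (deriv \<phi> x)) = 0" if "test_fun \<phi>" for \<phi>
    using wd weak_deriv_primitive[OF f'] that
    unfolding weak_deriv_def h_def by (simp add: left_diff_distrib)
  ultimately obtain C where C: "AE x in lebesgue. h x = C"
    by (rule weak_deriv_zero_imp_AE_const)
  show ?thesis
  proof (rule that)
    show "continuous_on UNIV (\<lambda>x. primitive f' x + C)"
      using continuous_on_primitive[OF f'] by (intro continuous_intros)
    show "AE x in lebesgue. f x = primitive f' x + C"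
      using C by eventually_elim (simp add: h_def algebra_simps)
    show "primitive f' y + C - (primitive f' x + C) = (LINT t:{x..y}|lebesgue. f' t)" if "x \<le> y" for x y
      using primitive_diff[OF f' that] by simp
  qed
qed

lemma not_integrable_indicator_atLeast: "\<not> integrable lebesgue (indicator {B..} :: real \<Rightarrow> real)"
proof
  assume int: "integrable lebesgue (indicator {B..} :: real \<Rightarrow> real)"
  have "real n \<le> (LINT x|lebesgue. indicator {B..} x)" for n
  proof -
    have "(LINT x|lebesgue. indicator {B..B + real n} x) \<le> (LINT x|lebesgue. indicator {B..} x :: real)"
      by (rule integral_mono[OF integrable_indicator_Icc int]) (auto simp: indicator_def)
    then show ?thesis
      by simp
  qed
  then show False
    using reals_Archimedean2 not_le by blast
qed

lemma not_integrable_indicator_atMost: "\<not> integrable lebesgue (indicator {..B} :: real \<Rightarrow> real)"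
proof
  assume int: "integrable lebesgue (indicator {..B} :: real \<Rightarrow> real)"
  have "real n \<le> (LINT x|lebesgue. indicator {..B} x)" for n
  proof -
    have "(LINT x|lebesgue. indicator {B - real n..B} x) \<le> (LINT x|lebesgue. indicator {..B} x :: real)"
      by (rule integral_mono[OF integrable_indicator_Icc int]) (auto simp: indicator_def)
    then show ?thesis
      by simp
  qed
  then show False
    using reals_Archimedean2 not_le by blast
qed

lemma integrable_indicator_if_norm_ge:
  fixes W :: "'a \<Rightarrow> 'b::{banach, second_countable_topology}"
  assumes W: "integrable M W" and "A \<in> sets M" "e > 0" and ge: "\<And>x. x \<in> A \<Longrightarrow> e \<le> norm (W x)"
  shows "integrable M (indicator A :: 'a \<Rightarrow> real)"
proof (rule Bochner_Integration.integrable_bound)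
  show "integrable M (\<lambda>x. norm (W x) / e)"
    using W by simp
  show "AE x in M. norm (indicator A x :: real) \<le> norm (norm (W x) / e)"
    using ge \<open>e > 0\<close> by (intro AE_I2) (simp add: indicator_def)
qed (use \<open>A \<in> sets M\<close> in simp)

lemma integrable_tendsto_at_top_imp_0:
  fixes W :: "real \<Rightarrow> 'a::{banach, second_countable_topology}"
  assumes W: "integrable lebesgue W" and lim: "(W \<longlongrightarrow> L) at_top"
  shows "L = 0"
proof (rule ccontr)
  assume "L \<noteq> 0"
  then have "norm L / 2 < norm L"
    by simp
  then have "eventually (\<lambda>t. norm L / 2 < norm (W t)) at_top"
    by (rule order_tendstoD(1)[OF tendsto_norm[OF lim]])
  then obtain B where "\<And>t. t \<ge> B \<Longrightarrow> norm L / 2 < norm (W t)"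
    unfolding eventually_at_top_linorder by blast
  then have "integrable lebesgue (indicator {B..} :: real \<Rightarrow> real)"
    using \<open>L \<noteq> 0\<close> by (intro integrable_indicator_if_norm_ge[OF W, of _ "norm L / 2"]) force+
  then show False
    using not_integrable_indicator_atLeast by blast
qed

lemma integrable_tendsto_at_bot_imp_0:
  fixes W :: "real \<Rightarrow> 'a::{banach, second_countable_topology}"
  assumes W: "integrable lebesgue W" and lim: "(W \<longlongrightarrow> L) at_bot"
  shows "L = 0"
proof (rule ccontr)
  assume "L \<noteq> 0"
  then have "norm L / 2 < norm L"
    by simp
  then have "eventually (\<lambda>t. norm L / 2 < norm (W t)) at_bot"
    by (rule order_tendstoD(1)[OF tendsto_norm[OF lim]])
  then obtain B where "\<And>t. t \<le> B \<Longrightarrow> norm L / 2 < norm (W t)"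
    unfolding eventually_at_bot_linorder by blast
  then have "integrable lebesgue (indicator {..B} :: real \<Rightarrow> real)"
    using \<open>L \<noteq> 0\<close> by (intro integrable_indicator_if_norm_ge[OF W, of _ "norm L / 2"]) force+
  then show False
    using not_integrable_indicator_atMost by blast
qed

lemma
  fixes w W :: "real \<Rightarrow> 'a::{banach, second_countable_topology}"
  assumes w: "integrable lebesgue w" and W: "integrable lebesgue W"
    and W': "\<And>a b. a \<le> b \<Longrightarrow> W b - W a = (LINT x:{a..b}|lebesgue. w x)"
  shows integrable_antiderivative_tendsto_at_top: "(W \<longlongrightarrow> 0) at_top"
    and integrable_antiderivative_tendsto_at_bot: "(W \<longlongrightarrow> 0) at_bot"
proof -
  have w_on: "set_integrable lebesgue A w" if "A \<in> sets lebesgue" for A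
    using integrable_mult_indicator[OF that w] by (simp add: set_integrable_def)
  have "((\<lambda>t. LINT x:{0..t}|lebesgue. w x) \<longlongrightarrow> (LINT x:{0..}|lebesgue. w x)) at_top"
    by (rule tendsto_set_lebesgue_integral_at_top) (auto intro: w_on)
  then have "((\<lambda>t. W 0 + (LINT x:{0..t}|lebesgue. w x)) \<longlongrightarrow> W 0 + (LINT x:{0..}|lebesgue. w x)) at_top"
    by (rule tendsto_add[OF tendsto_const])
  moreover have "eventually (\<lambda>t. W 0 + (LINT x:{0..t}|lebesgue. w x) = W t) at_top"
    unfolding eventually_at_top_linorder by (intro exI[of _ 0] allI impI) (simp add: W'[symmetric])
  ultimately have "(W \<longlongrightarrow> W 0 + (LINT x:{0..}|lebesgue. w x)) at_top"
    by (rule Lim_transform_eventually)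
  then show "(W \<longlongrightarrow> 0) at_top"
    using integrable_tendsto_at_top_imp_0[OF W] by metis
  have "((\<lambda>t. LINT x:{t..0}|lebesgue. w x) \<longlongrightarrow> (LINT x:{..0}|lebesgue. w x)) at_bot"
    by (rule tendsto_set_lebesgue_integral_at_bot) (auto intro: w_on)
  then have "((\<lambda>t. W 0 - (LINT x:{t..0}|lebesgue. w x)) \<longlongrightarrow> W 0 - (LINT x:{..0}|lebesgue. w x)) at_bot"
    by (rule tendsto_diff[OF tendsto_const])
  moreover have "eventually (\<lambda>t. W 0 - (LINT x:{t..0}|lebesgue. w x) = W t) at_bot"
    unfolding eventually_at_bot_linorder by (intro exI[of _ 0] allI impI) (simp add: W'[symmetric])
  ultimately have "(W \<longlongrightarrow> W 0 - (LINT x:{..0}|lebesgue. w x)) at_bot"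
    by (rule Lim_transform_eventually)
  then show "(W \<longlongrightarrow> 0) at_bot"
    using integrable_tendsto_at_bot_imp_0[OF W] by metis
qed

lemma integral_eq_0_if_integrable_antiderivative:
  fixes w W :: "real \<Rightarrow> 'a::{banach, second_countable_topology}"
  assumes w: "integrable lebesgue w" and W: "integrable lebesgue W"
    and W': "\<And>a b. a \<le> b \<Longrightarrow> W b - W a = (LINT x:{a..b}|lebesgue. w x)"
  shows "(LINT x|lebesgue. w x) = 0"
proof -
  have "(\<lambda>n. W (real n) - W (- real n)) \<longlonglongrightarrow> 0 - 0"
    using filterlim_compose[OF integrable_antiderivative_tendsto_at_top[OF assms] filterlim_real_sequentially]
      filterlim_compose[OF integrable_antiderivative_tendsto_at_bot[OF assms]
        filterlim_compose[OF filterlim_uminus_at_bot_at_top filterlim_real_sequentially]]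
    by (intro tendsto_diff) auto
  then have "(\<lambda>n. LINT x:{- real n..real n}|lebesgue. w x) \<longlonglongrightarrow> 0"
    by (simp add: W')
  moreover have "(\<lambda>n. LINT x:{- real n..real n}|lebesgue. w x) \<longlonglongrightarrow> (LINT x:(\<Union>n. {- real n..real n})|lebesgue. w x)"
    using integrable_mult_indicator[OF _ w]
    by (intro set_integral_cont_up) (auto simp: incseq_def set_integrable_def)
  ultimately show ?thesis
    using LIMSEQ_unique UN_symmetric_Icc_eq_UNIV by (fastforce simp: set_lebesgue_integral_def)
qed

lemma H1_integration_by_parts:
  assumes "H1_with_deriv f f'" and "H1_with_deriv g g'"
  shows "(LINT x|lebesgue. f' x * g x + f x * g' x) = 0"
proof -
  have L2: "L2 f" "L2 f'" "L2 g" "L2 g'"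
    using assms by (auto simp: H1_with_deriv_def)
  then have [measurable]: "f \<in> borel_measurable lebesgue" "f' \<in> borel_measurable lebesgue"
    "g \<in> borel_measurable lebesgue" "g' \<in> borel_measurable lebesgue"
    by (auto simp: L2_def)
  obtain F where F: "continuous_on UNIV F" and f_F: "AE x in lebesgue. f x = F x"
    and F': "\<And>x y. x \<le> y \<Longrightarrow> F y - F x = (LINT t:{x..y}|lebesgue. f' t)"
    using H1_continuous_representative[OF assms(1)] by blast
  obtain G where G: "continuous_on UNIV G" and g_G: "AE x in lebesgue. g x = G x"
    and G': "\<And>x y. x \<le> y \<Longrightarrow> G y - G x = (LINT t:{x..y}|lebesgue. g' t)"
    using H1_continuous_representative[OF assms(2)] by blast
  have [measurable]: "F \<in> borel_measurable lebesgue" "G \<in> borel_measurable lebesgue"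
    using F G by (auto intro: borel_measurable_continuous_lebesgue)
  have w: "AE x in lebesgue. f' x * g x + f x * g' x = f' x * G x + F x * g' x"
    using f_F g_G by eventually_elim simp
  have W: "AE x in lebesgue. f x * g x = F x * G x"
    using f_F g_G by eventually_elim simp
  have "(LINT x|lebesgue. f' x * G x + F x * g' x) = 0"
  proof (rule integral_eq_0_if_integrable_antiderivative)
    show "integrable lebesgue (\<lambda>x. f' x * G x + F x * g' x)"
      using integrable_mult_L2[OF L2(2,3)] integrable_mult_L2[OF L2(1,4)] integrable_cong_AE[OF _ _ w]
      by simp
    show "integrable lebesgue (\<lambda>x. F x * G x)"
      using integrable_mult_L2[OF L2(1,3)] integrable_cong_AE[OF _ _ W] by simp
    show "F b * G b - F a * G a = (LINT x:{a..b}|lebesgue. f' x * G x + F x * g' x)" if "a \<le> b" for a b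
      using L2 F F' G G' that by (intro set_integral_product_rule[symmetric] locally_integrable_L2)
  qed
  then show ?thesis
    using integral_cong_AE[OF _ _ w] by simp
qed

section \<open>The eigenvalue estimate\<close>

lemma H1_with_deriv_cnj:
  assumes "H1_with_deriv f f'"
  shows "H1_with_deriv (\<lambda>x. cnj (f x)) (\<lambda>x. cnj (f' x))"
proof -
  have L2_cnj: "L2 (\<lambda>x. cnj (h x))" if "L2 h" for h
    using that unfolding L2_def by auto
  have cnj_mult: "cnj z * of_real r = cnj (z * of_real r)" for z r
    by simp
  have "weak_deriv (\<lambda>x. cnj (f x)) (\<lambda>x. cnj (f' x))"
    using assms unfolding H1_with_deriv_def weak_deriv_def cnj_mult
    by (simp del: complex_cnj_mult)
  then show ?thesis
    using assms L2_cnj by (simp add: H1_with_deriv_def)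
qed

lemma eigen_equations_cross_term:
  fixes p1 p2 q1 q2 :: complex and a b l :: real
  assumes "- of_real a * p1 + \<i> * q2 = of_real l * p1" and "\<i> * q1 - of_real b * p2 = of_real l * p2"
  shows "cnj q1 * p2 + cnj p1 * q2 = \<i> * of_real ((b + l) * (cmod p2)\<^sup>2 - (a + l) * (cmod p1)\<^sup>2)"
proof -
  have solve: "q = - \<i> * r" if "\<i> * q = r" for q r :: complex
  proof -
    have "- \<i> * (\<i> * q) = - \<i> * r"
      using that by simp
    then show ?thesis
      by simp
  qed
  have q2: "q2 = - \<i> * (of_real (a + l) * p1)"
    using assms(1) by (intro solve) (simp add: algebra_simps)
  have q1: "q1 = - \<i> * (of_real (b + l) * p2)"
    using assms(2) by (intro solve) (simp add: algebra_simps)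
  have norm: "cnj p * p = of_real ((cmod p)\<^sup>2)" for p
    by (metis complex_norm_square mult.commute)
  have "cnj q1 * p2 + cnj p1 * q2 = \<i> * of_real (b + l) * (cnj p2 * p2) - \<i> * of_real (a + l) * (cnj p1 * p1)"
    unfolding q1 q2 by (simp add: algebra_simps)
  then show ?thesis
    unfolding norm by (simp add: algebra_simps)
qed

lemma integrable_AE_bounded_mult:
  fixes u n :: "'a \<Rightarrow> real"
  assumes "u \<in> borel_measurable M" and bound: "AE x in M. \<bar>u x\<bar> \<le> C" and n: "integrable M n"
  shows "integrable M (\<lambda>x. u x * n x)"
proof (rule Bochner_Integration.integrable_bound)
  show "integrable M (\<lambda>x. C * n x)"
    using n by simp
  show "(\<lambda>x. u x * n x) \<in> borel_measurable M"
    using assms by measurable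
  show "AE x in M. norm (u x * n x) \<le> norm (C * n x)"
    using bound by eventually_elim (simp add: abs_mult mult_right_mono)
qed

lemma integrable_Linf_mult_L2_norm:
  assumes u: "Linf u" and \<psi>: "L2 \<psi>"
  shows "integrable lebesgue (\<lambda>x. (u x + c) * (cmod (\<psi> x))\<^sup>2)"
proof -
  obtain M where "u \<in> borel_measurable lebesgue" "AE x in lebesgue. \<bar>u x\<bar> \<le> M"
    using u unfolding Linf_def by blast
  then show ?thesis
    using \<psi> unfolding L2_def
    by (intro integrable_AE_bounded_mult[where C="M + \<bar>c\<bar>"]) (auto elim: eventually_mono)
qed

lemma eigenfunction_energy_identity:
  fixes um up :: "real \<Rightarrow> real" and lam :: real
  assumes um: "Linf um" and up: "Linf up"
    and \<psi>1: "H1_with_deriv \<psi>1 \<psi>1'" and \<psi>2: "H1_with_deriv \<psi>2 \<psi>2'"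
    and eq: "AE x in lebesgue.
      - of_real (um x) * \<psi>1 x + \<i> * \<psi>2' x = of_real lam * \<psi>1 x \<and>
      \<i> * \<psi>1' x - of_real (up x) * \<psi>2 x = of_real lam * \<psi>2 x"
  shows "(LINT x|lebesgue. (up x + lam) * (cmod (\<psi>2 x))\<^sup>2) = (LINT x|lebesgue. (um x + lam) * (cmod (\<psi>1 x))\<^sup>2)"
proof -
  define D where "D x = (up x + lam) * (cmod (\<psi>2 x))\<^sup>2 - (um x + lam) * (cmod (\<psi>1 x))\<^sup>2" for x
  have L2: "L2 \<psi>1" "L2 \<psi>1'" "L2 \<psi>2" "L2 \<psi>2'"
    using \<psi>1 \<psi>2 by (auto simp: H1_with_deriv_def)
  have int1: "integrable lebesgue (\<lambda>x. (um x + lam) * (cmod (\<psi>1 x))\<^sup>2)"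
    and int2: "integrable lebesgue (\<lambda>x. (up x + lam) * (cmod (\<psi>2 x))\<^sup>2)"
    using integrable_Linf_mult_L2_norm um up L2 by auto
  then have [measurable]: "D \<in> borel_measurable lebesgue"
    unfolding D_def by (intro borel_measurable_diff borel_measurable_integrable)
  have [measurable]: "\<psi>1 \<in> borel_measurable lebesgue" "\<psi>1' \<in> borel_measurable lebesgue"
    "\<psi>2 \<in> borel_measurable lebesgue" "\<psi>2' \<in> borel_measurable lebesgue"
    using L2 by (auto simp: L2_def)
  have "AE x in lebesgue. cnj (\<psi>1' x) * \<psi>2 x + cnj (\<psi>1 x) * \<psi>2' x = \<i> * of_real (D x)"
    using eq by eventually_elim (unfold D_def, rule eigen_equations_cross_term, auto)
  then have "(LINT x|lebesgue. \<i> * of_real (D x)) = (LINT x|lebesgue. cnj (\<psi>1' x) * \<psi>2 x + cnj (\<psi>1 x) * \<psi>2' x)"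
    by (intro integral_cong_AE[symmetric]) measurable
  also have "\<dots> = 0"
    using H1_integration_by_parts[OF H1_with_deriv_cnj[OF \<psi>1] \<psi>2] .
  finally have "(LINT x|lebesgue. D x) = 0"
    by simp
  then show ?thesis
    using int1 int2 unfolding D_def by simp
qed

lemma AE_zero_if_weighted_integrals_eq:
  fixes a b n1 n2 :: "'a \<Rightarrow> real"
  assumes n1: "integrable M n1" "\<And>x. 0 \<le> n1 x" and n2: "integrable M n2" "\<And>x. 0 \<le> n2 x"
    and an1: "integrable M (\<lambda>x. a x * n1 x)" and bn2: "integrable M (\<lambda>x. b x * n2 x)"
    and eq: "(LINT x|M. b x * n2 x) = (LINT x|M. a x * n1 x)"
    and "\<alpha> > 0" "AE x in M. a x \<le> - \<alpha>" and "\<beta> > 0" "AE x in M. \<beta> \<le> b x"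
  shows "AE x in M. n1 x = 0 \<and> n2 x = 0"
proof -
  have "AE x in M. \<beta> * n2 x \<le> b x * n2 x"
    using \<open>AE x in M. \<beta> \<le> b x\<close> by eventually_elim (rule mult_right_mono[OF _ n2(2)])
  then have "(LINT x|M. \<beta> * n2 x) \<le> (LINT x|M. b x * n2 x)"
    using n2 bn2 by (intro integral_mono_AE) auto
  moreover have "AE x in M. a x * n1 x \<le> (- \<alpha>) * n1 x"
    using \<open>AE x in M. a x \<le> - \<alpha>\<close> by eventually_elim (rule mult_right_mono[OF _ n1(2)])
  then have "(LINT x|M. a x * n1 x) \<le> (LINT x|M. (- \<alpha>) * n1 x)"
    using n1 an1 by (intro integral_mono_AE) auto
  ultimately have "\<beta> * (LINT x|M. n2 x) \<le> - \<alpha> * (LINT x|M. n1 x)"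
    using eq by simp
  moreover have "0 \<le> \<beta> * (LINT x|M. n2 x)" "0 \<le> \<alpha> * (LINT x|M. n1 x)"
    using n1 n2 \<open>\<alpha> > 0\<close> \<open>\<beta> > 0\<close> by auto
  ultimately have "\<alpha> * (LINT x|M. n1 x) = 0" "\<beta> * (LINT x|M. n2 x) = 0"
    by linarith+
  then have "(LINT x|M. n1 x) = 0" "(LINT x|M. n2 x) = 0"
    using \<open>\<alpha> > 0\<close> \<open>\<beta> > 0\<close> by simp_all
  then show ?thesis
    using n1 n2 by (simp add: integral_nonneg_eq_0_iff_AE AE_conj_iff)
qed

lemma AE_le_if_Linf_norm_less:
  assumes "Linf_norm f < ereal r"
  obtains r' where "r' < r" "AE x in lebesgue. \<bar>f x\<bar> \<le> r'"
proof -
  obtain r' where r': "Linf_norm f < ereal r'" "r' < r"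
    using ereal_dense2[OF assms] by auto
  have "AE x in lebesgue. \<bar>f x\<bar> \<le> r'"
    using esssup_AE[of "\<lambda>x. ereal \<bar>f x\<bar>" lebesgue]
  proof eventually_elim
    case (elim x)
    then have "ereal \<bar>f x\<bar> < ereal r'"
      using r'(1) unfolding Linf_norm_def by (rule le_less_trans)
    then show ?case
      by simp
  qed
  with r'(2) show ?thesis
    by (rule that)
qed

lemma Linf_norm_le_if_AE_le:
  "f \<in> borel_measurable lebesgue \<Longrightarrow> AE x in lebesgue. \<bar>f x\<bar> \<le> r \<Longrightarrow> Linf_norm f \<le> ereal r"
  unfolding Linf_norm_def by (rule esssup_I) auto

lemma eigenvalue_alternative:
  fixes um up :: "real \<Rightarrow> real" and lam c :: real
  assumes um: "Linf um" and up: "Linf up" and "is_eigenvalue um up (complex_of_real lam)"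
  shows "ereal (c - lam) \<le> Linf_norm (pos_part (\<lambda>x. um x + c))
    \<or> ereal (c + lam) \<le> Linf_norm (neg_part (\<lambda>x. up x - c))"
proof (rule ccontr)
  obtain \<psi>1 \<psi>2 \<psi>1' \<psi>2' where \<psi>1: "H1_with_deriv \<psi>1 \<psi>1'" and \<psi>2: "H1_with_deriv \<psi>2 \<psi>2'"
    and nonzero: "\<not> (AE x in lebesgue. \<psi>1 x = 0 \<and> \<psi>2 x = 0)"
    and eq: "AE x in lebesgue.
      - of_real (um x) * \<psi>1 x + \<i> * \<psi>2' x = of_real lam * \<psi>1 x \<and>
      \<i> * \<psi>1' x - of_real (up x) * \<psi>2 x = of_real lam * \<psi>2 x"
    using assms(3) unfolding is_eigenvalue_def by blast
  have L2: "L2 \<psi>1" "L2 \<psi>2"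
    using \<psi>1 \<psi>2 by (auto simp: H1_with_deriv_def)
  assume "\<not> ?thesis"
  then obtain r1 r2 where "r1 < c - lam" "AE x in lebesgue. \<bar>pos_part (\<lambda>x. um x + c) x\<bar> \<le> r1"
    and "r2 < c + lam" "AE x in lebesgue. \<bar>neg_part (\<lambda>x. up x - c) x\<bar> \<le> r2"
    by (metis AE_le_if_Linf_norm_less not_le)
  have "AE x in lebesgue. um x + lam \<le> - (c - lam - r1)"
    using \<open>AE x in lebesgue. \<bar>pos_part (\<lambda>x. um x + c) x\<bar> \<le> r1\<close>
    by eventually_elim (simp add: pos_part_def)
  moreover have "AE x in lebesgue. c + lam - r2 \<le> up x + lam"
    using \<open>AE x in lebesgue. \<bar>neg_part (\<lambda>x. up x - c) x\<bar> \<le> r2\<close>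
    by eventually_elim (simp add: neg_part_def)
  ultimately have "AE x in lebesgue. (cmod (\<psi>1 x))\<^sup>2 = 0 \<and> (cmod (\<psi>2 x))\<^sup>2 = 0"
    using \<open>r1 < c - lam\<close> \<open>r2 < c + lam\<close> L2 um up eigenfunction_energy_identity[OF um up \<psi>1 \<psi>2 eq]
    by (intro AE_zero_if_weighted_integrals_eq[where \<alpha>="c - lam - r1" and \<beta>="c + lam - r2"])
       (auto simp: L2_def integrable_Linf_mult_L2_norm)
  with nonzero show False
    by (auto elim: eventually_mono)
qed

theorem theorem2p3:
  fixes um up :: "real \<Rightarrow> real" and lam :: real
  assumes "Linf um" and "Linf up"
    and "is_eigenvalue um up (complex_of_real lam)"
  shows "(\<forall>c::real.
            ereal (c - lam) \<le> Linf_norm (pos_part (\<lambda>x. um x + c))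
          \<or> ereal (c + lam) \<le> Linf_norm (neg_part (\<lambda>x. up x - c)))
       \<and> (\<forall>c::real. c > 0 \<longrightarrow> (AE x in lebesgue. up x \<ge> c) \<longrightarrow> (AE x in lebesgue. - um x \<ge> c)
            \<longrightarrow> \<not> (- c < lam \<and> lam < c))"
proof (intro conjI allI impI notI)
  show alternative: "ereal (c - lam) \<le> Linf_norm (pos_part (\<lambda>x. um x + c))
    \<or> ereal (c + lam) \<le> Linf_norm (neg_part (\<lambda>x. up x - c))" for c
    using assms by (rule eigenvalue_alternative)
  fix c :: real
  assume "AE x in lebesgue. up x \<ge> c" "AE x in lebesgue. - um x \<ge> c" "- c < lam \<and> lam < c"
  have [measurable]: "um \<in> borel_measurable lebesgue" "up \<in> borel_measurable lebesgue"
    using assms by (auto simp: Linf_def)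
  then have [measurable]: "pos_part (\<lambda>x. um x + c) \<in> borel_measurable lebesgue"
    "neg_part (\<lambda>x. up x - c) \<in> borel_measurable lebesgue"
    unfolding pos_part_def neg_part_def by measurable
  have "Linf_norm (pos_part (\<lambda>x. um x + c)) \<le> ereal 0"
    using \<open>AE x in lebesgue. - um x \<ge> c\<close>
    by (intro Linf_norm_le_if_AE_le) (auto simp: pos_part_def elim!: eventually_mono)
  moreover have "Linf_norm (neg_part (\<lambda>x. up x - c)) \<le> ereal 0"
    using \<open>AE x in lebesgue. up x \<ge> c\<close>
    by (intro Linf_norm_le_if_AE_le) (auto simp: neg_part_def elim!: eventually_mono)
  ultimately show False
    using alternative[of c] \<open>- c < lam \<and> lam < c\<close> by (auto dest: order_trans)
qed

end
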